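(* Consider logistic regression Bayesian networks on $m$ binary nodes as described in the context, for an ensemble $\mathcal{G}$ of DAGs on $[m]$ and parameter maps $\mathcal{P}(\mathcal{G})$. Then $$\Delta_{\max}:=\max_{i\in[m]}\max_{G\in\mathcal{G}}\sup_{\Theta\in\mathcal{P}(\mathcal{G})}\mathbb{E}_{X_{\pi_i(G)}}[\Delta(\eta_i,\eta_0)]\le \frac{w^1_{\max}}{2},\qquad \sup_{\Theta\in\mathcal{P}(\mathcal{G})}I(S;G\mid\Theta)\le\frac{n\,m\,w^1_{\max}}{2}.$$
   Context: Each $X_i\in\{0,1\}$. Given DAG $G$ and parameter map $\Theta$, node $i$ has a weight vector $w_i=\Theta_i(G)\in\mathbb{R}^{|\pi_i(G)|}$, and $X_i\mid X_{\pi_i(G)}\sim\mathrm{Bernoulli}(\sigma(\langle X_{\pi_i(G)},w_i\rangle))$ with $\sigma(t)=(1+e^{-t})^{-1}$; the reference (no-parent) distribution is $P_i(\varnothing,\Theta)=\mathrm{Bernoulli}(1/2)$. $w^1_{\max}:=\sup_{\Theta\in\mathcal{P}(\mathcal{G})}\max_{G\in\mathcal{G}}\max_{i}\|\Theta_i(G)\|_1$. The joint distribution is $\prod_iP_i(x_i\mid x_{\pi_i(G)})$; $S$ is $n$ i.i.d. samples from it; $I(S;G\mid\Theta)$ is the mutual information between $S$ and $G$ with $G$ uniform on $\mathcal{G}$ and $\Theta$ fixed. In the Bernoulli exponential family (sufficient statistic $x$), $\eta_i=\langle w_i,X_{\pi_i(G)}\rangle$ with expected sufficient statistic $\sigma(\eta_i)$,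 and $\eta_0=0$ with expected sufficient statistic $1/2$; $\Delta(\eta_1,\eta_2)=(\eta_1-\eta_2)(\tau(\eta_1)-\tau(\eta_2))$. $\mathbb{E}_{X_{\pi_i(G)}}$ is expectation over parents' values under the network's distribution. *)

theory Defs
  imports Complex_Main "HOL-Library.Extended_Real" "HOL-Library.FuncSet"
begin

text \<open>Nodes are 0..m-1. A DAG is given by its parent-set map G :: nat => nat set
  (G i = parents of node i). A parameter map Theta assigns to each DAG G, node i and
  parent j the weight Theta G i j (the j-th entry of w_i = Theta_i(G)).\<close>

type_synonym dag = "nat \<Rightarrow> nat set"
type_synonym param_map = "dag \<Rightarrow> nat \<Rightarrow> nat \<Rightarrow> real"

definition sigmoid :: "real \<Rightarrow> real" where
  "sigmoid t = 1 / (1 + exp (- t))"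

definition is_dag :: "nat \<Rightarrow> dag \<Rightarrow> bool" where
  "is_dag m G \<longleftrightarrow> (\<forall>i. G i \<subseteq> {..<m} \<and> (m \<le> i \<longrightarrow> G i = {}))
                    \<and> acyclic {(j, i). j \<in> G i}"

definition configs :: "nat \<Rightarrow> (nat \<Rightarrow> bool) set" where
  "configs m = PiE {..<m} (\<lambda>_. UNIV)"

definition eta :: "dag \<Rightarrow> param_map \<Rightarrow> nat \<Rightarrow> (nat \<Rightarrow> bool) \<Rightarrow> real" where
  "eta G Theta i x = (\<Sum>j\<in>G i. Theta G i j * of_bool (x j))"

definition node_pmf :: "dag \<Rightarrow> param_map \<Rightarrow> nat \<Rightarrow> (nat \<Rightarrow> bool) \<Rightarrow> real" where
  "node_pmf G Theta i x =
     (if x i then sigmoid (eta G Theta i x) else 1 - sigmoid (eta G Theta i x))"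

definition joint_pmf :: "nat \<Rightarrow> dag \<Rightarrow> param_map \<Rightarrow> (nat \<Rightarrow> bool) \<Rightarrow> real" where
  "joint_pmf m G Theta x = (\<Prod>i<m. node_pmf G Theta i x)"

text \<open>Bernoulli exponential family: tau = expected sufficient statistic = sigmoid
  (note sigmoid 0 = 1/2, the reference distribution).\<close>
definition bern_Delta :: "real \<Rightarrow> real \<Rightarrow> real" where
  "bern_Delta e1 e2 = (e1 - e2) * (sigmoid e1 - sigmoid e2)"

text \<open>E_{X_{pi_i(G)}}[Delta(eta_i, eta_0)] with eta_0 = 0\<close>
definition exp_Delta :: "nat \<Rightarrow> dag \<Rightarrow> param_map \<Rightarrow> nat \<Rightarrow> real" where
  "exp_Delta m G Theta i =
     (\<Sum>x\<in>configs m. joint_pmf m G Theta x * bern_Delta (eta G Theta i x) 0)"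

definition Delta_max :: "nat \<Rightarrow> dag set \<Rightarrow> param_map set \<Rightarrow> ereal" where
  "Delta_max m Gs Ps =
     (SUP i\<in>{..<m}. SUP G\<in>Gs. SUP Theta\<in>Ps. ereal (exp_Delta m G Theta i))"

definition w1_max :: "nat \<Rightarrow> dag set \<Rightarrow> param_map set \<Rightarrow> ereal" where
  "w1_max m Gs Ps =
     (SUP Theta\<in>Ps. SUP G\<in>Gs. SUP i\<in>{..<m}. ereal (\<Sum>j\<in>G i. \<bar>Theta G i j\<bar>))"

definition samples :: "nat \<Rightarrow> nat \<Rightarrow> (nat \<Rightarrow> nat \<Rightarrow> bool) set" where
  "samples m n = PiE {..<n} (\<lambda>_. configs m)"

definition sample_pmf :: "nat \<Rightarrow> nat \<Rightarrow> dag \<Rightarrow> param_map \<Rightarrow> (nat \<Rightarrow> nat \<Rightarrow> bool) \<Rightarrow> real" where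
  "sample_pmf m n G Theta S = (\<Prod>k<n. joint_pmf m G Theta (S k))"

text \<open>Mutual information (in nats) between a discrete observation s ranging over the
  finite set Omega and a parameter g uniform on the finite set A, with
  P g s = P(s | g). Convention 0 log 0 = 0.\<close>
definition mutual_info_unif :: "'g set \<Rightarrow> 's set \<Rightarrow> ('g \<Rightarrow> 's \<Rightarrow> real) \<Rightarrow> real" where
  "mutual_info_unif A Omega P =
     (\<Sum>g\<in>A. \<Sum>s\<in>Omega.
        if P g s = 0 then 0
        else (1 / real (card A)) * P g s *
             ln (P g s / ((\<Sum>g'\<in>A. P g' s) / real (card A))))"

definition MI_SG :: "nat \<Rightarrow> nat \<Rightarrow> dag set \<Rightarrow> param_map \<Rightarrow> real" where
  "MI_SG m n Gs Theta = mutual_info_unif Gs (samples m n) (\<lambda>G S. sample_pmf m n G Theta S)"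

end

theory Submission imports Defs begin

text \<open>For a node with natural parameter \<open>\<eta>\<close>, the likelihood ratio of its conditional law against
  \<open>Bernoulli(1/2)\<close> is \<open>2 \<sigma>(\<pm>\<eta>) \<le> exp(\<bar>\<eta>\<bar>/2)\<close>, and \<open>\<Delta>(\<eta>, 0) = \<eta> (\<sigma>(\<eta>) - 1/2) \<le> \<bar>\<eta>\<bar>/2\<close>;
  both are controlled by \<open>\<bar>\<eta>\<bar> \<le> \<parallel>w\<^sub>i\<parallel>\<^sub>1\<close>. The mutual information \<open>I(S;G)\<close> is the average
  log-likelihood ratio of \<open>P(S|G)\<close> against the uniform law on samples, minus the nonnegative
  divergence of the mixture from uniform, so it is at most \<open>n m w\<^sup>1\<^sub>m\<^sub>a\<^sub>x / 2\<close>. The only structural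
  input is that the joint distribution of a DAG is normalised, which follows by summing out a
  sink node.\<close>

definition w1_norm :: "dag \<Rightarrow> param_map \<Rightarrow> nat \<Rightarrow> real" where
  "w1_norm G Theta i = (\<Sum>j\<in>G i. \<bar>Theta G i j\<bar>)"

lemma w1_max_eq: "w1_max m Gs Ps = (SUP Theta\<in>Ps. SUP G\<in>Gs. SUP i\<in>{..<m}. ereal (w1_norm G Theta i))"
  by (simp add: w1_max_def w1_norm_def)

lemma w1_norm_le_w1_max:
  "Theta \<in> Ps \<Longrightarrow> G \<in> Gs \<Longrightarrow> i < m \<Longrightarrow> ereal (w1_norm G Theta i) \<le> w1_max m Gs Ps"
  unfolding w1_max_eq
  by (intro SUP_upper2[where i = Theta] SUP_upper2[where i = G] SUP_upper2[where i = i]) auto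

lemma sigmoid_pos: "0 < sigmoid t"
  by (simp add: sigmoid_def add_pos_pos)

lemma sigmoid_less_1: "sigmoid t < 1"
  by (simp add: sigmoid_def add_pos_pos divide_less_eq)

lemma sigmoid_zero: "sigmoid 0 = 1 / 2"
  by (simp add: sigmoid_def)

lemma sigmoid_minus: "sigmoid (- t) = 1 - sigmoid t"
proof -
  have "1 + exp t > 0" by (simp add: add_pos_pos)
  then show ?thesis by (simp add: sigmoid_def exp_minus field_simps)
qed

text \<open>With \<open>a = exp(t/2)\<close> this is \<open>2a\<^sup>2/(a\<^sup>2 + 1) \<le> a\<close>, i.e. AM-GM \<open>2a \<le> a\<^sup>2 + 1\<close>.\<close>
lemma ln_two_sigmoid_le: "ln (2 * sigmoid t) \<le> t / 2"
proof -
  define a where "a = exp (t / 2)"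
  have a: "0 < a" by (simp add: a_def)
  have "2 * sigmoid t = 2 * a\<^sup>2 / (a\<^sup>2 + 1)"
    unfolding sigmoid_def a_def using a
    by (simp add: exp_minus field_simps power2_eq_square flip: exp_add)
  also have "\<dots> \<le> a"
  proof -
    have "2 * a \<le> a\<^sup>2 + 1"
      using sum_squares_ge_zero[of "a - 1" 0] by (simp add: power2_eq_square algebra_simps)
    then have "2 * a\<^sup>2 \<le> a * (a\<^sup>2 + 1)"
      using mult_left_mono[of "2 * a" "a\<^sup>2 + 1" a] a by (simp add: power2_eq_square algebra_simps)
    moreover have "0 < a\<^sup>2 + 1" by (rule add_nonneg_pos) simp_all
    ultimately show ?thesis by (simp add: pos_divide_le_eq mult.commute)
  qed
  finally have "ln (2 * sigmoid t) \<le> ln a" using sigmoid_pos by (intro ln_mono) auto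
  then show ?thesis by (simp add: a_def)
qed

lemma bern_Delta_zero_le: "bern_Delta e 0 \<le> \<bar>e\<bar> / 2"
proof -
  have "\<bar>sigmoid e - 1 / 2\<bar> \<le> 1 / 2" using sigmoid_pos[of e] sigmoid_less_1[of e] by linarith
  then have "e * (sigmoid e - 1 / 2) \<le> \<bar>e\<bar> * (1 / 2)"
    by (metis abs_ge_self abs_mult abs_ge_zero mult_left_mono order_trans)
  then show ?thesis by (simp add: bern_Delta_def sigmoid_zero)
qed

lemma abs_eta_le_w1_norm: "\<bar>eta G Theta i x\<bar> \<le> w1_norm G Theta i"
  unfolding eta_def w1_norm_def
  by (rule order_trans[OF sum_abs]) (intro sum_mono, simp add: abs_mult)

lemma node_pmf_pos: "0 < node_pmf G Theta i x"
  using sigmoid_pos sigmoid_less_1 by (simp add: node_pmf_def)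

lemma eta_fun_upd: "v \<notin> G i \<Longrightarrow> eta G Theta i (x(v := b)) = eta G Theta i x"
  unfolding eta_def by (intro sum.cong) auto

lemma node_pmf_fun_upd:
  "i \<noteq> v \<Longrightarrow> v \<notin> G i \<Longrightarrow> node_pmf G Theta i (x(v := b)) = node_pmf G Theta i x"
  by (simp add: node_pmf_def eta_fun_upd)

lemma sum_node_pmf_fun_upd: "v \<notin> G v \<Longrightarrow> (\<Sum>b\<in>UNIV. node_pmf G Theta v (x(v := b))) = 1"
  by (simp add: UNIV_bool node_pmf_def eta_fun_upd)

lemma ln_two_node_pmf_le: "ln (2 * node_pmf G Theta i x) \<le> w1_norm G Theta i / 2"
proof -
  have "ln (2 * node_pmf G Theta i x) \<le> \<bar>eta G Theta i x\<bar> / 2"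
    using ln_two_sigmoid_le[of "eta G Theta i x"] ln_two_sigmoid_le[of "- eta G Theta i x"]
    by (cases "x i") (simp_all add: node_pmf_def sigmoid_minus)
  then show ?thesis using abs_eta_le_w1_norm[of G Theta i x] by simp
qed

lemma sum_PiE_insert:
  assumes "v \<notin> V"
  shows "(\<Sum>x\<in>PiE (insert v V) T. f x) = (\<Sum>(b, g)\<in>T v \<times> PiE V T. f (g(v := b)))"
  unfolding PiE_insert_eq
  by (subst sum.reindex[OF inj_combinator[OF assms]]) (simp add: case_prod_beta)

lemma acyclic_has_sink:
  assumes "finite V" "V \<noteq> {}" "acyclic {(j, i). j \<in> G i}"
  obtains v where "v \<in> V" "\<forall>i\<in>V. v \<notin> G i"
proof -
  define R where "R = {(j, i). j \<in> G i \<and> i \<in> V \<and> j \<in> V}"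
  have "R \<subseteq> V \<times> V" by (auto simp: R_def)
  then have "finite R" using finite_cartesian_product[OF assms(1) assms(1)] by (rule finite_subset)
  moreover have "acyclic R" using assms(3) by (rule acyclic_subset) (auto simp: R_def)
  ultimately have "wf (R\<inverse>)" by (rule finite_acyclic_wf_converse)
  then obtain v where v: "v \<in> V" and minimal: "\<And>i. (i, v) \<in> R\<inverse> \<Longrightarrow> i \<notin> V"
    using assms(2) by (rule wfE_min') auto
  have "v \<notin> G i" if "i \<in> V" for i
    using minimal[of i] that v by (auto simp: R_def)
  with v show thesis by (intro that) auto
qed

text \<open>The sink \<open>v\<close> is a parent of no node in \<open>V\<close>, so only its own factor depends on \<open>x v\<close>,
  and that factor sums to one.\<close>
lemma sum_prod_node_pmf_remove_sink:
  assumes "finite V" "v \<in> V" "\<forall>i\<in>V. v \<notin> G i"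
  shows "(\<Sum>x\<in>PiE V (\<lambda>_. UNIV). \<Prod>i\<in>V. node_pmf G Theta i x)
       = (\<Sum>x\<in>PiE (V - {v}) (\<lambda>_. UNIV). \<Prod>i\<in>V - {v}. node_pmf G Theta i x)"
    (is "_ = (\<Sum>x\<in>PiE ?V' _. ?P x)")
proof -
  have V: "V = insert v ?V'" using assms(2) by blast
  have "(\<Sum>x\<in>PiE V (\<lambda>_. UNIV). \<Prod>i\<in>V. node_pmf G Theta i x)
      = (\<Sum>(b, x)\<in>UNIV \<times> PiE ?V' (\<lambda>_. UNIV). node_pmf G Theta v (x(v := b)) * ?P x)"
    using assms by (subst V, subst sum_PiE_insert)
      (auto simp: prod.remove[OF assms(1,2)] intro!: sum.cong prod.cong node_pmf_fun_upd)
  also have "\<dots> = (\<Sum>x\<in>PiE ?V' (\<lambda>_. UNIV). (\<Sum>b\<in>UNIV. node_pmf G Theta v (x(v := b))) * ?P x)"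
    by (subst sum.cartesian_product[symmetric], subst sum.swap) (simp add: sum_distrib_right)
  also have "\<dots> = (\<Sum>x\<in>PiE ?V' (\<lambda>_. UNIV). ?P x)"
    using assms by (simp add: sum_node_pmf_fun_upd)
  finally show ?thesis .
qed

text \<open>No closure of \<open>V\<close> under parents is needed: parents outside \<open>V\<close> are read at junk values.\<close>
lemma sum_prod_node_pmf_eq_1:
  assumes "finite V" "acyclic {(j, i). j \<in> G i}"
  shows "(\<Sum>x\<in>PiE V (\<lambda>_. UNIV). \<Prod>i\<in>V. node_pmf G Theta i x) = 1"
  using assms(1)
proof (induction V rule: finite_remove_induct)
  case empty
  then show ?case by simp
next
  case (remove V)
  then obtain v where "v \<in> V" "\<forall>i\<in>V. v \<notin> G i"
    using acyclic_has_sink assms(2) by metis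
  with remove show ?case by (simp add: sum_prod_node_pmf_remove_sink)
qed

lemma joint_pmf_pos: "0 < joint_pmf m G Theta x"
  unfolding joint_pmf_def by (intro prod_pos) (simp add: node_pmf_pos)

lemma sum_joint_pmf_eq_1: "is_dag m G \<Longrightarrow> (\<Sum>x\<in>configs m. joint_pmf m G Theta x) = 1"
  unfolding configs_def joint_pmf_def is_dag_def
  by (rule sum_prod_node_pmf_eq_1) auto

lemma exp_Delta_le_w1_norm:
  assumes "is_dag m G"
  shows "exp_Delta m G Theta i \<le> w1_norm G Theta i / 2"
proof -
  have "exp_Delta m G Theta i \<le> (\<Sum>x\<in>configs m. joint_pmf m G Theta x * (w1_norm G Theta i / 2))"
  proof (unfold exp_Delta_def, intro sum_mono mult_left_mono)
    fix x
    show "bern_Delta (eta G Theta i x) 0 \<le> w1_norm G Theta i / 2"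
      by (rule order_trans[OF bern_Delta_zero_le]) (simp add: abs_eta_le_w1_norm divide_right_mono)
    show "0 \<le> joint_pmf m G Theta x" using joint_pmf_pos by (rule less_imp_le)
  qed
  also have "\<dots> = w1_norm G Theta i / 2"
    using sum_joint_pmf_eq_1[OF assms] by (simp add: sum_distrib_right[symmetric] del: times_divide_eq_right)
  finally show ?thesis .
qed

lemma finite_configs: "finite (configs m)"
  unfolding configs_def by (intro finite_PiE) auto

lemma card_configs: "card (configs m) = 2 ^ m"
  unfolding configs_def by (simp add: card_PiE)

lemma finite_samples: "finite (samples m n)"
  unfolding samples_def by (intro finite_PiE finite_configs) auto

lemma card_samples: "card (samples m n) = 2 ^ (m * n)"
  unfolding samples_def by (simp add: card_PiE card_configs power_mult)

lemma sample_pmf_pos: "0 < sample_pmf m n G Theta S"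
  unfolding sample_pmf_def by (intro prod_pos) (simp add: joint_pmf_pos)

lemma sum_sample_pmf_eq_1: "is_dag m G \<Longrightarrow> (\<Sum>S\<in>samples m n. sample_pmf m n G Theta S) = 1"
  unfolding samples_def sample_pmf_def
  using prod_sum_PiE[of "{..<n}" "\<lambda>_. configs m" "\<lambda>_ x. joint_pmf m G Theta x", symmetric]
  by (simp add: finite_configs sum_joint_pmf_eq_1)

lemma ln_card_samples_mult_sample_pmf_le:
  assumes "\<forall>i<m. w1_norm G Theta i \<le> c"
  shows "ln (real (card (samples m n)) * sample_pmf m n G Theta S) \<le> real n * real m * c / 2"
proof -
  have "real (card (samples m n)) * sample_pmf m n G Theta S
      = (\<Prod>k<n. \<Prod>i<m. 2 * node_pmf G Theta i (S k))"
    by (simp add: card_samples sample_pmf_def joint_pmf_def prod.distrib power_mult)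
  then have "ln (real (card (samples m n)) * sample_pmf m n G Theta S)
      = (\<Sum>k<n. \<Sum>i<m. ln (2 * node_pmf G Theta i (S k)))"
    by (simp add: ln_prod node_pmf_pos prod_pos less_imp_neq[symmetric])
  also have "\<dots> \<le> (\<Sum>k<n. \<Sum>i<m. c / 2)"
  proof (intro sum_mono)
    fix k i assume "i \<in> {..<m}"
    then have "w1_norm G Theta i \<le> c" using assms by simp
    then show "ln (2 * node_pmf G Theta i (S k)) \<le> c / 2"
      using ln_two_node_pmf_le[of G Theta i "S k"] by linarith
  qed
  finally show ?thesis by simp
qed

lemma sum_mult_ln_ratio_nonneg:
  fixes p q :: "'a \<Rightarrow> real"
  assumes "finite Om" "\<forall>s\<in>Om. 0 < p s" "\<forall>s\<in>Om. 0 < q s" "sum q Om \<le> sum p Om"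
  shows "0 \<le> (\<Sum>s\<in>Om. p s * ln (p s / q s))"
proof -
  have "p s - q s \<le> p s * ln (p s / q s)" if "s \<in> Om" for s
  proof -
    have pq: "0 < p s" "0 < q s" using assms that by auto
    have "- ln (p s / q s) \<le> q s / p s - 1"
      using ln_le_minus_one[of "q s / p s"] pq by (simp add: ln_div)
    then have "p s * (1 - q s / p s) \<le> p s * ln (p s / q s)"
      using pq by (intro mult_left_mono) auto
    moreover have "p s * (1 - q s / p s) = p s - q s" using pq by (simp add: field_simps)
    ultimately show ?thesis by simp
  qed
  then have "(\<Sum>s\<in>Om. p s - q s) \<le> (\<Sum>s\<in>Om. p s * ln (p s / q s))" by (rule sum_mono)
  then show ?thesis using assms(4) by (simp add: sum_subtractf)
qed

text \<open>Splitting \<open>ln (P/P\<^sub>m\<^sub>i\<^sub>x)\<close> at the uniform distribution \<open>1/N\<close>, the mutual information becomes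
  the average of \<open>ln (N P)\<close> minus the divergence of the mixture from uniform.\<close>
lemma mutual_info_unif_le:
  fixes P :: "'g \<Rightarrow> 's \<Rightarrow> real"
  assumes A: "finite A" "A \<noteq> {}" and Om: "finite Om"
    and pos: "\<And>g s. g \<in> A \<Longrightarrow> s \<in> Om \<Longrightarrow> 0 < P g s"
    and norm: "\<And>g. g \<in> A \<Longrightarrow> (\<Sum>s\<in>Om. P g s) = 1"
    and bound: "\<And>g s. g \<in> A \<Longrightarrow> s \<in> Om \<Longrightarrow> ln (real (card Om) * P g s) \<le> C"
  shows "mutual_info_unif A Om P \<le> C"
proof -
  define k where "k = real (card A)"
  define N where "N = real (card Om)"
  define Pmix where "Pmix s = (\<Sum>g\<in>A. P g s) / k" for s
  have k: "0 < k" using A by (simp add: k_def card_gt_0_iff)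
  have "Om \<noteq> {}" using norm A by fastforce
  then have N: "0 < N" using Om by (simp add: N_def card_gt_0_iff)
  have Pmix_pos: "0 < Pmix s" if "s \<in> Om" for s
    unfolding Pmix_def using k A pos that by (intro divide_pos_pos sum_pos) auto
  have sum_Pmix: "(\<Sum>s\<in>Om. Pmix s) = 1"
    using norm k by (simp add: Pmix_def k_def sum_divide_distrib[symmetric] sum.swap[of _ A Om])
  have "mutual_info_unif A Om P = (\<Sum>g\<in>A. \<Sum>s\<in>Om.
          (1 / k) * P g s * ln (N * P g s) - (1 / k) * P g s * ln (N * Pmix s))"
    unfolding mutual_info_unif_def k_def[symmetric] Pmix_def[symmetric]
  proof (intro sum.cong refl)
    fix g s assume gs: "g \<in> A" "s \<in> Om"
    have "P g s / Pmix s = (N * P g s) / (N * Pmix s)" using N by simp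
    then have "ln (P g s / Pmix s) = ln (N * P g s) - ln (N * Pmix s)"
      using pos[OF gs] Pmix_pos[OF gs(2)] N by (simp add: ln_div ln_mult)
    then show "(if P g s = 0 then 0 else 1 / k * P g s * ln (P g s / Pmix s))
        = 1 / k * P g s * ln (N * P g s) - 1 / k * P g s * ln (N * Pmix s)"
      using pos[OF gs] by (simp add: right_diff_distrib)
  qed
  also have "\<dots> = (\<Sum>g\<in>A. \<Sum>s\<in>Om. (1 / k) * P g s * ln (N * P g s))
      - (\<Sum>s\<in>Om. Pmix s * ln (Pmix s / (1 / N)))"
    by (simp add: sum_subtractf sum.swap[of _ A Om] Pmix_def sum_distrib_right sum_divide_distrib
        mult.commute)
  also have "\<dots> \<le> (\<Sum>g\<in>A. \<Sum>s\<in>Om. (1 / k) * P g s * C) - 0"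
  proof (rule diff_mono)
    show "(\<Sum>g\<in>A. \<Sum>s\<in>Om. (1 / k) * P g s * ln (N * P g s)) \<le> (\<Sum>g\<in>A. \<Sum>s\<in>Om. (1 / k) * P g s * C)"
      using pos bound k by (intro sum_mono mult_left_mono) (auto simp: N_def less_imp_le)
    show "0 \<le> (\<Sum>s\<in>Om. Pmix s * ln (Pmix s / (1 / N)))"
      using Om Pmix_pos N sum_Pmix by (intro sum_mult_ln_ratio_nonneg) (auto simp: N_def)
  qed
  also have "\<dots> = (\<Sum>g\<in>A. (1 / k) * (\<Sum>s\<in>Om. P g s) * C)"
    by (simp only: sum_distrib_right[symmetric] sum_distrib_left[symmetric])
  also have "\<dots> = C"
    using norm k by (simp add: k_def)
  finally show ?thesis .
qed

lemma MI_SG_le: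
  assumes "finite Gs" "Gs \<noteq> {}" "\<forall>G\<in>Gs. is_dag m G"
    and "\<forall>G\<in>Gs. \<forall>i<m. w1_norm G Theta i \<le> c"
  shows "MI_SG m n Gs Theta \<le> real n * real m * c / 2"
  unfolding MI_SG_def using assms
  by (intro mutual_info_unif_le finite_samples sample_pmf_pos sum_sample_pmf_eq_1
      ln_card_samples_mult_sample_pmf_le) auto

lemma exp_Delta_le_w1_max:
  assumes "is_dag m G" "G \<in> Gs" "Theta \<in> Ps" "i < m"
  shows "ereal (exp_Delta m G Theta i) \<le> w1_max m Gs Ps / 2"
proof -
  have "ereal (exp_Delta m G Theta i) \<le> ereal (w1_norm G Theta i) / 2"
    using exp_Delta_le_w1_norm[OF assms(1)] by simp
  also have "\<dots> \<le> w1_max m Gs Ps / 2"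
    using w1_norm_le_w1_max[OF assms(3,2,4)] by (rule ereal_divide_right_mono) simp
  finally show ?thesis .
qed

lemma w1_norm_bound_le_w1_max:
  assumes "finite Gs" "Gs \<noteq> {}" "Theta \<in> Ps"
  obtains c where "\<forall>G\<in>Gs. \<forall>i<m. w1_norm G Theta i \<le> c" "0 < m \<Longrightarrow> ereal c \<le> w1_max m Gs Ps"
proof (cases "m = 0")
  case True
  then show thesis by (intro that[of 0]) auto
next
  case False
  define W where "W = (\<lambda>(G, i). w1_norm G Theta i) ` (Gs \<times> {..<m})"
  have W: "finite W" "W \<noteq> {}" using assms False by (auto simp: W_def)
  then have "Max W \<in> W" by (rule Max_in)
  then have "ereal (Max W) \<le> w1_max m Gs Ps"
    using w1_norm_le_w1_max[OF assms(3)] by (auto simp: W_def)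
  moreover have "\<forall>G\<in>Gs. \<forall>i<m. w1_norm G Theta i \<le> Max W"
    using W by (auto simp: W_def intro!: Max_ge)
  ultimately show thesis using that by blast
qed

lemma MI_SG_le_w1_max:
  assumes "finite Gs" "Gs \<noteq> {}" "\<forall>G\<in>Gs. is_dag m G" "Theta \<in> Ps"
  shows "ereal (MI_SG m n Gs Theta) \<le> ereal (real n * real m) * w1_max m Gs Ps / 2"
proof -
  obtain c where c: "\<forall>G\<in>Gs. \<forall>i<m. w1_norm G Theta i \<le> c" "0 < m \<Longrightarrow> ereal c \<le> w1_max m Gs Ps"
    using w1_norm_bound_le_w1_max[OF assms(1,2,4)] by metis
  have MI: "ereal (MI_SG m n Gs Theta) \<le> ereal (real n * real m) * ereal c / 2"
    using MI_SG_le[OF assms(1-3) c(1)] by simp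
  show ?thesis
  proof (cases "n = 0 \<or> m = 0")
    case True
    \<comment> \<open>for \<open>m = 0\<close> the bound \<open>w1_max\<close> is the empty supremum \<open>-\<infinity>\<close>, but \<open>0 * -\<infinity> = 0\<close> in \<open>ereal\<close>\<close>
    then show ?thesis using MI by (auto simp: zero_ereal_def[symmetric])
  next
    case False
    then have "ereal (real n * real m) * ereal c \<le> ereal (real n * real m) * w1_max m Gs Ps"
      using c(2) by (intro ereal_mult_left_mono) auto
    then have "ereal (real n * real m) * ereal c / 2 \<le> ereal (real n * real m) * w1_max m Gs Ps / 2"
      by (rule ereal_divide_right_mono) simp
    with MI show ?thesis by (rule order_trans)
  qed
qed

theorem lemma10:
  fixes m n :: nat and Gs :: "dag set" and Ps :: "param_map set"
  assumes "finite Gs" and "Gs \<noteq> {}" and "\<forall>G\<in>Gs. is_dag m G"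
  shows "Delta_max m Gs Ps \<le> w1_max m Gs Ps / 2
         \<and> (SUP Theta\<in>Ps. ereal (MI_SG m n Gs Theta))
           \<le> ereal (real n * real m) * w1_max m Gs Ps / 2"
proof
  show "Delta_max m Gs Ps \<le> w1_max m Gs Ps / 2"
    unfolding Delta_max_def
    using exp_Delta_le_w1_max assms(3) by (intro SUP_least) auto
  show "(SUP Theta\<in>Ps. ereal (MI_SG m n Gs Theta)) \<le> ereal (real n * real m) * w1_max m Gs Ps / 2"
    using MI_SG_le_w1_max[OF assms] by (intro SUP_least)
qed

end
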